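(* Let $(V,\langle\cdot,\cdot\rangle)$ be a pseudo-Euclidean real vector space of signature $(k,l)$ with $k\ge2$, $l\ge2$, let $Z\subseteq V$ be a subspace with $q^+(Z)\ge1$, and let $H\subseteq V$ be a positive $(k-1)$-plane, so that $V=H\oplus H^\perp$ with $H^\perp$ Minkowski of signature $(1,l)$. Let $\pi^{H^\perp}:V\to H^\perp$ be the projection along $H$, and let $C^+(H^\perp)$ be either one of the two connected components of $\{w\in H^\perp:\langle w,w\rangle\ge0\}\setminus\{0\}$. The following are equivalent: (i) $H$ is $Z$-orthogonally-extendable; (ii) $q^+(Z\cap H^\perp)\ge1$; (iii) $\pi^{H^\perp}(Z^\perp)\cap C^+(H^\perp)=\emptyset$.
   Context: A pseudo-Euclidean space of signature $(k,l)$ is a finite-dimensional real vector space with a symmetric non-degenerate bilinear form whose Sylvester diagonal form has $k$ entries $+1$ and $l$ entries $-1$. For a subspace $L$, $q^+(L)$ denotes the number of $+1$'s in a diagonalization of the restriction of the form to $L$, and $L^\perp$ is the orthogonal complement in $V$. A positive $r$-plane is an $r$-dimensional subspace on which the form is positive definite. $H$ is $Z$-orthogonally-extendable if there is $z\in Z\cap H^\perp$ with $H+\mathbb{R}z$ a positive $k$-plane. *)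

theory Defs
  imports "HOL-Analysis.Analysis"
begin

definition pe_form :: "('a::euclidean_space \<Rightarrow> 'a \<Rightarrow> real) \<Rightarrow> bool" where
  "pe_form B \<longleftrightarrow> bilinear B \<and> (\<forall>x y. B x y = B y x) \<and> (\<forall>x. (\<forall>y. B x y = 0) \<longrightarrow> x = 0)"

definition diag_basis :: "('a::euclidean_space \<Rightarrow> 'a \<Rightarrow> real) \<Rightarrow> 'a set \<Rightarrow> 'a set \<Rightarrow> bool" where
  "diag_basis B L b \<longleftrightarrow> finite b \<and> independent b \<and> span b = L \<and>
     (\<forall>u\<in>b. \<forall>v\<in>b. u \<noteq> v \<longrightarrow> B u v = 0) \<and> (\<forall>e\<in>b. B e e \<in> {-1, 0, 1})"

definition q_plus :: "('a::euclidean_space \<Rightarrow> 'a \<Rightarrow> real) \<Rightarrow> 'a set \<Rightarrow> nat" where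
  "q_plus B L = card {e \<in> (SOME b. diag_basis B L b). B e e = 1}"

definition q_minus :: "('a::euclidean_space \<Rightarrow> 'a \<Rightarrow> real) \<Rightarrow> 'a set \<Rightarrow> nat" where
  "q_minus B L = card {e \<in> (SOME b. diag_basis B L b). B e e = -1}"

definition has_signature :: "('a::euclidean_space \<Rightarrow> 'a \<Rightarrow> real) \<Rightarrow> nat \<Rightarrow> nat \<Rightarrow> bool" where
  "has_signature B k l \<longleftrightarrow> q_plus B UNIV = k \<and> q_minus B UNIV = l"

definition orth_compl :: "('a::euclidean_space \<Rightarrow> 'a \<Rightarrow> real) \<Rightarrow> 'a set \<Rightarrow> 'a set" where
  "orth_compl B L = {v. \<forall>u\<in>L. B u v = 0}"

definition pos_plane :: "('a::euclidean_space \<Rightarrow> 'a \<Rightarrow> real) \<Rightarrow> nat \<Rightarrow> 'a set \<Rightarrow> bool" where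
  "pos_plane B r P \<longleftrightarrow> subspace P \<and> dim P = r \<and> (\<forall>v\<in>P. v \<noteq> 0 \<longrightarrow> B v v > 0)"

text \<open>H is Z-orthogonally-extendable (k = positive index of the ambient space).\<close>
definition orth_extendable ::
  "('a::euclidean_space \<Rightarrow> 'a \<Rightarrow> real) \<Rightarrow> nat \<Rightarrow> 'a set \<Rightarrow> 'a set \<Rightarrow> bool" where
  "orth_extendable B k Z H \<longleftrightarrow>
     (\<exists>z \<in> Z \<inter> orth_compl B H. pos_plane B k {h + c *\<^sub>R z | h c. h \<in> H})"

definition proj_perp :: "('a::euclidean_space \<Rightarrow> 'a \<Rightarrow> real) \<Rightarrow> 'a set \<Rightarrow> 'a \<Rightarrow> 'a" where
  "proj_perp B H v = (THE w. w \<in> orth_compl B H \<and> v - w \<in> H)"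

end

theory Submission
  imports Defs
begin

text \<open>
  \<open>K = H\<^sup>\<perp>\<close> is a Minkowski space: it contains timelike vectors (otherwise it would be a
  nonpositive subspace of dimension \<open>dim V - k + 1\<close>), and a nonzero causal vector of \<open>K\<close> is
  never orthogonal to a timelike one, since adjoining the timelike vector to \<open>H\<close> gives a
  maximal positive plane, whose orthogonal complement is negative definite.
  Consequently (i) \<open>\<longleftrightarrow>\<close> (ii) is immediate.  For (ii) \<open>\<longleftrightarrow>\<close> (iii), the projection of \<open>Z\<^sup>\<perp>\<close>
  is \<open>K \<inter> W\<^sup>\<perp>\<close> with \<open>W = Z \<inter> K\<close>.  If \<open>W\<close> contains a timelike \<open>z\<close>, this lies in \<open>z\<^sup>\<perp>\<close> and misses
  the causal cone.  If \<open>W\<close> is nonpositive, a dimension count against the negative index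
  yields a nonzero causal vector in \<open>(H + W)\<^sup>\<perp>\<close>, and it or its negative lies in \<open>C\<close>: each
  half-cone \<open>{w causal. \<langle>t, w\<rangle> > 0}\<close>, \<open>t\<close> timelike, is star-shaped about \<open>t\<close>, hence lies in one
  component.
\<close>

lemma dim_add_le_of_inter_zero:
  fixes S T :: "'a::euclidean_space set"
  assumes "subspace S" "subspace T" "\<And>x. x \<in> S \<Longrightarrow> x \<in> T \<Longrightarrow> x = 0"
  shows "dim S + dim T \<le> DIM('a)"
proof -
  have "dim (S \<inter> T) = 0" using assms(3) by auto
  then show ?thesis
    using dim_sums_Int[OF assms(1,2)] dim_subset_UNIV[of "{x + y |x y. x \<in> S \<and> y \<in> T}"]
    by linarith
qed

locale pseudo_euclidean =
  fixes B :: "'a::euclidean_space \<Rightarrow> 'a \<Rightarrow> real"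
  assumes pe_form: "pe_form B"
begin

lemma linear_left: "linear (\<lambda>x. B x y)" and linear_right: "linear (B x)"
  using pe_form unfolding pe_form_def bilinear_def by auto

lemma commute: "B x y = B y x"
  using pe_form unfolding pe_form_def by auto

lemma nondegenerate: "(\<And>y. B x y = 0) \<Longrightarrow> x = 0"
  using pe_form unfolding pe_form_def by auto

lemma add_left [simp]: "B (x + y) z = B x z + B y z"
  and add_right [simp]: "B z (x + y) = B z x + B z y"
  and scale_left [simp]: "B (c *\<^sub>R x) z = c * B x z"
  and scale_right [simp]: "B z (c *\<^sub>R x) = c * B z x"
  and diff_left [simp]: "B (x - y) z = B x z - B y z"
  and diff_right [simp]: "B z (x - y) = B z x - B z y"
  and minus_left [simp]: "B (- x) z = - B x z"
  and minus_right [simp]: "B z (- x) = - B z x"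
  and zero_left [simp]: "B 0 z = 0"
  and zero_right [simp]: "B z 0 = 0"
  using linear_add[OF linear_left] linear_add[OF linear_right]
    linear_scale[OF linear_left] linear_scale[OF linear_right]
    linear_diff[OF linear_left] linear_diff[OF linear_right]
    linear_neg[OF linear_left] linear_neg[OF linear_right]
    linear_0[OF linear_left] linear_0[OF linear_right]
  by auto

lemma sum_left: "B (\<Sum>i\<in>I. f i) z = (\<Sum>i\<in>I. B (f i) z)"
  and sum_right: "B z (\<Sum>i\<in>I. f i) = (\<Sum>i\<in>I. B z (f i))"
  using linear_sum[OF linear_left] linear_sum[OF linear_right] by auto

lemma form_self_add_orthogonal:
  "B x y = 0 \<Longrightarrow> B (x + y) (x + y) = B x x + B y y"
  by (simp add: commute[of y x])

lemma subspace_orth_compl: "subspace (orth_compl B S)"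
  unfolding subspace_def orth_compl_def by auto

lemma form_zero_on_isotropic_subspace:
  assumes "subspace L" "\<forall>w\<in>L. B w w = 0" "u \<in> L" "v \<in> L"
  shows "B u v = 0"
proof -
  have "B (u + v) (u + v) = 0" using assms subspace_add by blast
  then show ?thesis using assms by (simp add: commute[of v u])
qed

lemma diag_basis_insert:
  assumes L: "subspace L" and e: "e \<in> L" "B e e \<in> {-1, 1}"
    and b: "diag_basis B {u \<in> L. B e u = 0} b"
  shows "diag_basis B L (insert e b)"
proof -
  have span_b: "span b = {u \<in> L. B e u = 0}" using b unfolding diag_basis_def by auto
  have e_notin: "e \<notin> span b" using span_b e by auto
  have "span (insert e b) = L"
  proof
    show "span (insert e b) \<subseteq> L"
      using span_b e L span_base by (intro span_minimal) blast+
    show "L \<subseteq> span (insert e b)"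
    proof
      fix x assume x: "x \<in> L"
      have "x - (B e x / B e e) *\<^sub>R e \<in> span b"
        unfolding span_b using x e L by (auto simp: subspace_diff subspace_scale)
      then show "x \<in> span (insert e b)" unfolding span_insert by auto
    qed
  qed
  moreover have "independent (insert e b)"
    using b e_notin unfolding diag_basis_def by (simp add: independent_insert)
  moreover have "B u v = 0" if "u \<in> insert e b" "v \<in> insert e b" "u \<noteq> v" for u v
  proof -
    have "B e w = 0" if "w \<in> b" for w using that span_b span_base by blast
    then show ?thesis using that b commute[of u e] unfolding diag_basis_def by auto
  qed
  moreover have "B u u \<in> {-1, 0, 1}" if "u \<in> insert e b" for u
    using that e(2) b unfolding diag_basis_def by auto
  moreover have "finite (insert e b)" using b unfolding diag_basis_def by simp
  ultimately show ?thesis unfolding diag_basis_def by blast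
qed

lemma diag_basis_exists: "subspace L \<Longrightarrow> \<exists>b. diag_basis B L b"
proof (induction "dim L" arbitrary: L rule: less_induct)
  case less
  show ?case
  proof (cases "\<forall>w\<in>L. B w w = 0")
    case True
    obtain b where b: "b \<subseteq> L" "independent b" "L \<subseteq> span b"
      using basis_exists[of L] by metis
    have "span b = L" using b less.prems span_minimal by blast
    then show ?thesis
      using b True form_zero_on_isotropic_subspace[OF less.prems True]
      unfolding diag_basis_def by (intro exI[of _ b]) (auto simp: finiteI_independent)
  next
    case False
    then obtain v where v: "v \<in> L" "B v v \<noteq> 0" by auto
    define e where "e = (1 / sqrt \<bar>B v v\<bar>) *\<^sub>R v"
    have eL: "e \<in> L" using v less.prems unfolding e_def by (simp add: subspace_scale)
    have "B e e = B v v / \<bar>B v v\<bar>" unfolding e_def using v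
      by (simp add: real_sqrt_mult[symmetric] del: real_sqrt_mult)
    then have ee: "B e e \<in> {-1, 1}" using v by (cases "B v v > 0") auto
    define L' where "L' = {u \<in> L. B e u = 0}"
    have L': "subspace L'" unfolding L'_def using less.prems by (auto simp: subspace_def)
    have "e \<notin> L'" using ee unfolding L'_def by auto
    then have "L' \<subset> L" using eL unfolding L'_def by auto
    then have "span L' \<subset> span L" using L' less.prems by (simp add: span_eq_iff[THEN iffD2])
    then have "dim L' < dim L" by (rule dim_psubset)
    then obtain b where "diag_basis B L' b" using less.hyps L' by blast
    then show ?thesis using diag_basis_insert[OF less.prems eL ee] unfolding L'_def by blast
  qed
qed

lemma form_sum_pairwise_orthogonal:
  assumes "finite b" "pairwise (\<lambda>u v. B u v = 0) b"
  shows "B (\<Sum>e\<in>b. c e *\<^sub>R e) (\<Sum>e\<in>b. c e *\<^sub>R e) = (\<Sum>e\<in>b. (c e)\<^sup>2 * B e e)"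
proof -
  have diag: "(\<Sum>f\<in>b. c f * B f e) = c e * B e e" if "e \<in> b" for e
  proof -
    have "(\<Sum>f\<in>b. c f * B f e) = (\<Sum>f\<in>b. if f = e then c e * B e e else 0)"
      using assms(2) that by (intro sum.cong refl) (auto simp: pairwise_def)
    then show ?thesis using assms(1) that by simp
  qed
  have "B (\<Sum>e\<in>b. c e *\<^sub>R e) (\<Sum>e\<in>b. c e *\<^sub>R e) = (\<Sum>e\<in>b. c e * (\<Sum>f\<in>b. c f * B f e))"
    by (simp add: sum_left sum_right)
  also have "\<dots> = (\<Sum>e\<in>b. (c e)\<^sup>2 * B e e)"
    using diag by (intro sum.cong refl) (simp add: power2_eq_square)
  finally show ?thesis .
qed

lemma form_nonpos_on_span:
  assumes "finite b" "pairwise (\<lambda>u v. B u v = 0) b" "\<forall>e\<in>b. B e e \<le> 0" "v \<in> span b"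
  shows "B v v \<le> 0"
proof -
  obtain c where "v = (\<Sum>e\<in>b. c e *\<^sub>R e)" using assms(1,4) span_finite by auto
  then have "B v v = (\<Sum>e\<in>b. (c e)\<^sup>2 * B e e)" using form_sum_pairwise_orthogonal assms by simp
  also have "\<dots> \<le> 0" using assms(3) by (intro sum_nonpos) (simp add: mult_nonneg_nonpos)
  finally show ?thesis .
qed

lemma form_pos_on_span:
  assumes "finite b" "pairwise (\<lambda>u v. B u v = 0) b" "\<forall>e\<in>b. B e e > 0"
    and "v \<in> span b" "v \<noteq> 0"
  shows "B v v > 0"
proof -
  obtain c where v: "v = (\<Sum>e\<in>b. c e *\<^sub>R e)" using assms(1,4) span_finite by auto
  moreover have "\<not> (\<forall>e\<in>b. c e = 0)"
  proof
    assume "\<forall>e\<in>b. c e = 0"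
    then have "v = 0" unfolding v by simp
    then show False using assms(5) by simp
  qed
  ultimately obtain e where "e \<in> b" "c e \<noteq> 0" by blast
  then have "(\<Sum>e\<in>b. (c e)\<^sup>2 * B e e) > 0"
    using assms by (intro sum_pos2[of b e]) auto
  then show ?thesis using v form_sum_pairwise_orthogonal assms by simp
qed

lemma diag_basis_subset:
  assumes "diag_basis B L b" "c \<subseteq> b"
  shows "finite c" "independent c" "pairwise (\<lambda>u v. B u v = 0) c"
proof -
  show "finite c" using assms finite_subset unfolding diag_basis_def by blast
  show "independent c" using assms independent_mono unfolding diag_basis_def by blast
  show "pairwise (\<lambda>u v. B u v = 0) c"
    using assms unfolding diag_basis_def pairwise_def by blast
qed

lemma one_le_q_plus_iff:
  assumes "subspace L"
  shows "1 \<le> q_plus B L \<longleftrightarrow> (\<exists>v\<in>L. B v v > 0)"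
proof -
  define b where "b = (SOME b. diag_basis B L b)"
  have b: "diag_basis B L b"
    unfolding b_def using diag_basis_exists[OF assms] by (rule someI_ex)
  then have "finite b" unfolding diag_basis_def by auto
  then have "1 \<le> q_plus B L \<longleftrightarrow> (\<exists>e\<in>b. B e e = 1)"
    unfolding q_plus_def b_def[symmetric] by (auto simp: Suc_le_eq card_gt_0_iff)
  also have "\<dots> \<longleftrightarrow> (\<exists>v\<in>L. B v v > 0)"
  proof
    have "b \<subseteq> L" using b span_base unfolding diag_basis_def by blast
    then show "\<exists>e\<in>b. B e e = 1 \<Longrightarrow> \<exists>v\<in>L. B v v > 0"
      by (metis subsetD zero_less_one)
  next
    assume "\<exists>v\<in>L. B v v > 0"
    then obtain v where v: "v \<in> span b" "B v v > 0" using b unfolding diag_basis_def by auto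
    show "\<exists>e\<in>b. B e e = 1"
    proof (rule ccontr)
      assume "\<not> (\<exists>e\<in>b. B e e = 1)"
      moreover have "\<forall>e\<in>b. B e e \<in> {-1, 0, 1}" using b unfolding diag_basis_def by blast
      ultimately have "\<forall>e\<in>b. B e e \<le> 0" by fastforce
      then have "B v v \<le> 0"
        using form_nonpos_on_span diag_basis_subset[OF b order_refl] v(1) by blast
      then show False using v(2) by simp
    qed
  qed
  finally show ?thesis .
qed

definition representer :: "'a \<Rightarrow> 'a" where
  "representer v = (\<Sum>i\<in>Basis. B i v *\<^sub>R i)"

lemma inner_representer: "x \<bullet> representer v = B x v"
proof -
  have "x \<bullet> representer v = (\<Sum>i\<in>Basis. (x \<bullet> i) * B i v)"
    unfolding representer_def by (simp add: inner_sum_right mult.commute)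
  also have "\<dots> = B (\<Sum>i\<in>Basis. (x \<bullet> i) *\<^sub>R i) v" by (simp add: sum_left)
  also have "\<dots> = B x v" by (simp add: euclidean_representation)
  finally show ?thesis .
qed

lemma linear_representer: "linear representer"
  by (rule linearI) (simp_all add: representer_def scaleR_add_left sum.distrib scaleR_sum_right)

lemma inj_representer: "inj representer"
proof (rule injI)
  fix v w assume "representer v = representer w"
  then have "B x (v - w) = 0" for x
    using inner_representer[of x v] inner_representer[of x w] by simp
  then have "B (v - w) x = 0" for x using commute[of "v - w" x] by simp
  then show "v = w" using nondegenerate[of "v - w"] by simp
qed

lemma dim_orth_compl:
  assumes "subspace S"
  shows "dim (orth_compl B S) + dim S = DIM('a)"
proof -
  let ?E = "{y \<in> UNIV. \<forall>x\<in>S. orthogonal x y}"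
  have "representer ` orth_compl B S = ?E"
  proof
    show "representer ` orth_compl B S \<subseteq> ?E"
      unfolding orth_compl_def orthogonal_def by (auto simp: inner_representer)
    show "?E \<subseteq> representer ` orth_compl B S"
    proof
      fix y assume y: "y \<in> ?E"
      obtain v where "y = representer v"
        using linear_inj_imp_surj[OF linear_representer inj_representer] by (metis surjD)
      then show "y \<in> representer ` orth_compl B S"
        using y unfolding orth_compl_def orthogonal_def by (auto simp: inner_representer)
    qed
  qed
  moreover have "dim (representer ` orth_compl B S) = dim (orth_compl B S)"
    using dim_image_eq[OF linear_representer] inj_representer by (metis inj_on_subset subset_UNIV)
  ultimately show ?thesis
    using dim_subspace_orthogonal_to_vectors[of S UNIV] assms by simp
qed

lemma orth_compl_orth_compl:
  assumes "subspace S"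
  shows "orth_compl B (orth_compl B S) = S"
proof -
  have "S \<subseteq> orth_compl B (orth_compl B S)" unfolding orth_compl_def by (auto simp: commute)
  moreover have "dim (orth_compl B (orth_compl B S)) = dim S"
    using dim_orth_compl[OF assms] dim_orth_compl[OF subspace_orth_compl[of S]] by simp
  ultimately have "S = orth_compl B (orth_compl B S)"
    using subspace_dim_equal[OF assms subspace_orth_compl] by simp
  then show ?thesis by (rule sym)
qed

lemma orth_compl_sums:
  assumes "subspace S" "subspace T"
  shows "orth_compl B {x + y |x y. x \<in> S \<and> y \<in> T} = orth_compl B S \<inter> orth_compl B T"
proof
  show "orth_compl B {x + y |x y. x \<in> S \<and> y \<in> T} \<subseteq> orth_compl B S \<inter> orth_compl B T"
  proof
    fix v assume v: "v \<in> orth_compl B {x + y |x y. x \<in> S \<and> y \<in> T}"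
    have "B (x + 0) v = 0" if "x \<in> S" for x
      using v that subspace_0[OF assms(2)] unfolding orth_compl_def by blast
    moreover have "B (0 + y) v = 0" if "y \<in> T" for y
      using v that subspace_0[OF assms(1)] unfolding orth_compl_def by blast
    ultimately show "v \<in> orth_compl B S \<inter> orth_compl B T"
      unfolding orth_compl_def by simp
  qed
  show "orth_compl B S \<inter> orth_compl B T \<subseteq> orth_compl B {x + y |x y. x \<in> S \<and> y \<in> T}"
    unfolding orth_compl_def by auto
qed

lemma positive_subspace_inter_orth_compl:
  "\<forall>v\<in>S. v \<noteq> 0 \<longrightarrow> B v v > 0 \<Longrightarrow> S \<inter> orth_compl B S \<subseteq> {0}"
  unfolding orth_compl_def by force

lemma orth_compl_decomposition:
  assumes "subspace S" "S \<inter> orth_compl B S \<subseteq> {0}"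
  obtains s u where "s \<in> S" "u \<in> orth_compl B S" "y = s + u"
proof -
  let ?ST = "{x + y |x y. x \<in> S \<and> y \<in> orth_compl B S}"
  have "dim (S \<inter> orth_compl B S) = 0" using assms(2) by simp
  then have "dim ?ST = DIM('a)"
    using dim_sums_Int[OF assms(1) subspace_orth_compl[of S]] dim_orth_compl[OF assms(1)] by linarith
  then have "span ?ST = UNIV" using dim_eq_full by auto
  moreover have "span ?ST = ?ST"
    using subspace_sums[OF assms(1) subspace_orth_compl] by (simp add: span_eq_iff)
  ultimately have "y \<in> ?ST" by simp
  then obtain s u where "s \<in> S" "u \<in> orth_compl B S" "y = s + u" by blast
  then show ?thesis by (rule that)
qed

lemma proj_perp_spec:
  assumes "subspace H" "H \<inter> orth_compl B H \<subseteq> {0}"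
  shows "proj_perp B H v \<in> orth_compl B H" "v - proj_perp B H v \<in> H"
    and "w \<in> orth_compl B H \<Longrightarrow> v - w \<in> H \<Longrightarrow> proj_perp B H v = w"
proof -
  obtain s u where su: "s \<in> H" "u \<in> orth_compl B H" "v = s + u"
    using orth_compl_decomposition[OF assms] .
  have unique: "\<exists>!w. w \<in> orth_compl B H \<and> v - w \<in> H"
  proof (rule ex1I[of _ u])
    show "u \<in> orth_compl B H \<and> v - u \<in> H" using su by simp
    fix w assume w: "w \<in> orth_compl B H \<and> v - w \<in> H"
    have "s - (v - w) \<in> H" using subspace_diff[OF assms(1) su(1)] w by blast
    moreover have "w - u = s - (v - w)" using su(3) by simp
    ultimately have "w - u \<in> H" by (simp only:)
    moreover have "w - u \<in> orth_compl B H"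
      using subspace_diff[OF subspace_orth_compl] w su(2) by blast
    ultimately show "w = u" using assms(2) by auto
  qed
  show "proj_perp B H v \<in> orth_compl B H" "v - proj_perp B H v \<in> H"
    using theI'[OF unique] unfolding proj_perp_def by auto
  show "w \<in> orth_compl B H \<Longrightarrow> v - w \<in> H \<Longrightarrow> proj_perp B H v = w"
    using the1_equality[OF unique] unfolding proj_perp_def by auto
qed

lemma isotropic_orthogonal_on_nonpos_subspace:
  assumes W: "subspace W" "\<forall>v\<in>W. B v v \<le> 0"
    and w: "w \<in> W" "B w w = 0" and u: "u \<in> W"
  shows "B w u = 0"
proof (rule ccontr)
  assume "B w u \<noteq> 0"
  define t where "t = B w u / (\<bar>B u u\<bar> + 1)"
  have "\<bar>B u u\<bar> + 1 \<noteq> 0" using abs_ge_zero[of "B u u"] by linarith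
  then have t: "B w u = t * (\<bar>B u u\<bar> + 1)" "t \<noteq> 0"
    using \<open>B w u \<noteq> 0\<close> unfolding t_def by simp_all
  \<comment> \<open>Moving from the isotropic \<open>w\<close> a little towards \<open>u\<close> produces a positive vector in \<open>W\<close>.\<close>
  have "B (w + t *\<^sub>R u) (w + t *\<^sub>R u) = t\<^sup>2 * (2 * (\<bar>B u u\<bar> + 1) + B u u)"
    using w(2) t(1) by (simp add: commute[of u w] power2_eq_square algebra_simps)
  moreover have "t\<^sup>2 * (2 * (\<bar>B u u\<bar> + 1) + B u u) > 0"
    using t(2) abs_ge_minus_self[of "B u u"] by (intro mult_pos_pos) auto
  moreover have "w + t *\<^sub>R u \<in> W" using W w u by (simp add: subspace_add subspace_scale)
  then have "B (w + t *\<^sub>R u) (w + t *\<^sub>R u) \<le> 0" using W(2) by blast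
  ultimately show False by linarith
qed

lemma pos_plane_add_orthogonal:
  assumes H: "subspace H" "\<forall>v\<in>H. v \<noteq> 0 \<longrightarrow> B v v > 0"
    and z: "z \<in> orth_compl B H" "B z z > 0"
  shows "pos_plane B (dim H + 1) {h + c *\<^sub>R z | h c. h \<in> H}"
proof -
  let ?P = "{h + c *\<^sub>R z | h c. h \<in> H}"
  have zH: "B h z = 0" if "h \<in> H" for h using z(1) that unfolding orth_compl_def by auto
  have P: "?P = {x + y |x y. x \<in> H \<and> y \<in> span {z}}" unfolding span_singleton by auto
  have "H \<inter> span {z} \<subseteq> {0}"
  proof
    fix x assume "x \<in> H \<inter> span {z}"
    then obtain c where x: "x \<in> H" "x = c *\<^sub>R z" unfolding span_singleton by auto
    then have "c * B z z = 0" using zH[of x] by simp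
    then show "x \<in> {0}" using x z(2) by simp
  qed
  then have "dim (H \<inter> span {z}) = 0" by simp
  moreover have "dim (span {z}) = 1" using z(2) by auto
  ultimately have "dim ?P = dim H + 1"
    unfolding P using dim_sums_Int[OF H(1) subspace_span[of "{z}"]] by linarith
  moreover have "subspace ?P" unfolding P using subspace_sums[OF H(1) subspace_span] .
  moreover have "B x x > 0" if x: "x \<in> ?P" "x \<noteq> 0" for x
  proof -
    obtain h c where hc: "x = h + c *\<^sub>R z" "h \<in> H" using x(1) by blast
    have "B x x = B h h + c\<^sup>2 * B z z"
      unfolding hc(1) using zH[OF hc(2)] by (subst form_self_add_orthogonal) (simp_all add: power2_eq_square)
    moreover have "h \<noteq> 0 \<or> c \<noteq> 0" using x hc by auto
    then have "B h h > 0 \<or> c\<^sup>2 * B z z > 0" using H(2) hc(2) z(2) by auto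
    moreover have "B h h \<ge> 0" using H(2) hc(2) by (cases "h = 0") auto
    moreover have "c\<^sup>2 * B z z \<ge> 0" using z(2) by simp
    ultimately show ?thesis by linarith
  qed
  ultimately show ?thesis unfolding pos_plane_def by auto
qed

end

locale pseudo_euclidean_signature = pseudo_euclidean +
  fixes k :: nat
  assumes q_plus_UNIV: "q_plus B UNIV = k"
begin

lemma positive_nonpositive_splitting:
  obtains P N where "subspace P" "dim P = k" "\<forall>v\<in>P. v \<noteq> 0 \<longrightarrow> B v v > 0"
    and "subspace N" "dim N + k = DIM('a)" "\<forall>v\<in>N. B v v \<le> 0"
proof -
  define b where "b = (SOME b. diag_basis B UNIV b)"
  have b: "diag_basis B UNIV b"
    unfolding b_def using diag_basis_exists[OF subspace_UNIV] by (rule someI_ex)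
  define bp where "bp = {e \<in> b. B e e = 1}"
  define bn where "bn = {e \<in> b. B e e \<noteq> 1}"
  have bp: "finite bp" "independent bp" "pairwise (\<lambda>u v. B u v = 0) bp"
    using diag_basis_subset[OF b] unfolding bp_def by auto
  have bn: "finite bn" "independent bn" "pairwise (\<lambda>u v. B u v = 0) bn"
    using diag_basis_subset[OF b] unfolding bn_def by auto
  have "card b = DIM('a)"
    using b dim_span_eq_card_independent[of b] unfolding diag_basis_def by simp
  moreover have "b = bp \<union> bn" "bp \<inter> bn = {}" unfolding bp_def bn_def by auto
  moreover have "card bp = k" using q_plus_UNIV unfolding q_plus_def b_def[symmetric] bp_def .
  ultimately have card_bn: "card bn + k = DIM('a)" using card_Un_disjoint[OF bp(1) bn(1)] by simp
  have "\<forall>e\<in>bn. B e e \<le> 0"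
  proof
    fix e assume "e \<in> bn"
    then have "B e e \<in> {-1, 0, 1}" "B e e \<noteq> 1" using b unfolding bn_def diag_basis_def by auto
    then show "B e e \<le> 0" by auto
  qed
  moreover have "\<forall>e\<in>bp. B e e > 0" unfolding bp_def by simp
  ultimately show ?thesis
    using that[of "span bp" "span bn"] form_pos_on_span[OF bp(1,3)] form_nonpos_on_span[OF bn(1,3)]
      dim_span_eq_card_independent[OF bp(2)] dim_span_eq_card_independent[OF bn(2)]
      \<open>card bp = k\<close> card_bn
    by simp
qed

lemma dim_positive_subspace_le:
  assumes "subspace P" "\<forall>v\<in>P. v \<noteq> 0 \<longrightarrow> B v v > 0"
  shows "dim P \<le> k"
proof -
  obtain N where N: "subspace N" "dim N + k = DIM('a)" "\<forall>v\<in>N. B v v \<le> 0"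
    using positive_nonpositive_splitting by metis
  have "x = 0" if "x \<in> P" "x \<in> N" for x
    using that assms(2) N(3) by (meson not_less)
  then have "dim P + dim N \<le> DIM('a)" using dim_add_le_of_inter_zero[OF assms(1) N(1)] by blast
  then show ?thesis using N(2) by simp
qed

lemma dim_nonpositive_subspace_le:
  assumes "subspace N" "\<forall>v\<in>N. B v v \<le> 0"
  shows "dim N + k \<le> DIM('a)"
proof -
  obtain P where P: "subspace P" "dim P = k" "\<forall>v\<in>P. v \<noteq> 0 \<longrightarrow> B v v > 0"
    using positive_nonpositive_splitting by metis
  have "x = 0" if "x \<in> P" "x \<in> N" for x
    using that assms(2) P(3) by (meson not_less)
  then have "dim P + dim N \<le> DIM('a)" using dim_add_le_of_inter_zero[OF P(1) assms(1)] by blast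
  then show ?thesis using P(2) by simp
qed

lemma causal_orthogonal_maximal_positive_zero:
  assumes S: "pos_plane B k S" and x: "x \<in> orth_compl B S" "B x x \<ge> 0"
  shows "x = 0"
proof -
  have S': "subspace S" "dim S = k" "\<forall>v\<in>S. v \<noteq> 0 \<longrightarrow> B v v > 0"
    using S unfolding pos_plane_def by auto
  have nonpos: "\<forall>u\<in>orth_compl B S. B u u \<le> 0"
  proof (rule ballI, rule ccontr)
    fix u assume u: "u \<in> orth_compl B S" "\<not> B u u \<le> 0"
    then have "pos_plane B (k + 1) {h + c *\<^sub>R u | h c. h \<in> S}"
      using pos_plane_add_orthogonal[OF S'(1,3) u(1)] S'(2) by simp
    then show False using dim_positive_subspace_le unfolding pos_plane_def by fastforce
  qed
  then have "B x x = 0" using x by fastforce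
  then have orth_u: "B x u = 0" if "u \<in> orth_compl B S" for u
    using isotropic_orthogonal_on_nonpos_subspace[OF subspace_orth_compl nonpos x(1)] that by blast
  have orth_s: "B x s = 0" if "s \<in> S" for s
    using x(1) that commute[of s x] unfolding orth_compl_def by auto
  have "B x y = 0" for y
  proof -
    obtain s u where "s \<in> S" "u \<in> orth_compl B S" "y = s + u"
      using orth_compl_decomposition[OF S'(1) positive_subspace_inter_orth_compl[OF S'(3)]] .
    then show ?thesis using orth_u orth_s by simp
  qed
  then show ?thesis by (rule nondegenerate)
qed

lemma causal_vector_in_orth_compl:
  assumes U: "subspace U" "dim U < k" and W: "subspace W" "\<forall>v\<in>W. B v v \<le> 0"
  obtains w where "w \<in> orth_compl B U" "w \<in> orth_compl B W" "w \<noteq> 0" "B w w \<ge> 0"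
proof -
  let ?UW = "{x + y |x y. x \<in> U \<and> y \<in> W}"
  let ?M = "orth_compl B ?UW"
  have M: "?M = orth_compl B U \<inter> orth_compl B W" using orth_compl_sums[OF U(1) W(1)] .
  have "\<exists>w\<in>?M. w \<noteq> 0 \<and> B w w \<ge> 0"
  proof (rule ccontr)
    assume "\<not> ?thesis"
    then have neg: "B m m < 0" if "m \<in> ?M" "m \<noteq> 0" for m using that by force
    \<comment> \<open>Then \<open>W + (U + W)\<^sup>\<perp>\<close> is a nonpositive subspace of dimension \<open>> DIM('a) - k\<close>.\<close>
    let ?N = "{x + y |x y. x \<in> W \<and> y \<in> ?M}"
    have "\<forall>v\<in>?N. B v v \<le> 0"
    proof
      fix v assume "v \<in> ?N"
      then obtain y m where v: "v = y + m" "y \<in> W" "m \<in> ?M" by blast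
      have "B y m = 0" using M v(2,3) unfolding orth_compl_def by blast
      then have "B v v = B y y + B m m" unfolding v(1) by (rule form_self_add_orthogonal)
      moreover have "B m m \<le> 0" using neg[OF v(3)] by (cases "m = 0") auto
      moreover have "B y y \<le> 0" using W(2) v(2) by blast
      ultimately show "B v v \<le> 0" by linarith
    qed
    then have 1: "dim ?N + k \<le> DIM('a)"
      using dim_nonpositive_subspace_le subspace_sums[OF W(1) subspace_orth_compl] by blast
    have "x = 0" if "x \<in> W" "x \<in> ?M" for x
    proof -
      have "B x x = 0" using that M unfolding orth_compl_def by blast
      then show ?thesis using neg[OF that(2)] by force
    qed
    then have "dim (W \<inter> ?M) = 0" by auto
    then have 2: "dim ?N = dim W + dim ?M"
      using dim_sums_Int[OF W(1) subspace_orth_compl[of ?UW]] by linarith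
    have 3: "dim ?M + dim ?UW = DIM('a)" using dim_orth_compl[OF subspace_sums[OF U(1) W(1)]] .
    have 4: "dim ?UW \<le> dim U + dim W" using dim_sums_Int[OF U(1) W(1)] by linarith
    show False using 1 2 3 4 U(2) by linarith
  qed
  then show ?thesis using that M by blast
qed

end

locale lorentzian_complement = pseudo_euclidean_signature +
  fixes H :: "'a set"
  assumes pos_plane_H: "pos_plane B (k - 1) H" and one_le_k: "1 \<le> k"
begin

abbreviation K :: "'a set" where "K \<equiv> orth_compl B H"

lemma subspace_H: "subspace H" and dim_H: "dim H + 1 = k"
  and positive_H: "\<forall>v\<in>H. v \<noteq> 0 \<longrightarrow> B v v > 0"
  using pos_plane_H one_le_k unfolding pos_plane_def by auto

lemma H_inter_K: "H \<inter> K \<subseteq> {0}"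
  using positive_subspace_inter_orth_compl[OF positive_H] .

lemma timelike_exists: obtains t where "t \<in> K" "B t t > 0"
proof -
  have "\<exists>t\<in>K. B t t > 0"
  proof (rule ccontr)
    assume "\<not> ?thesis"
    then have "dim K + k \<le> DIM('a)"
      using dim_nonpositive_subspace_le[OF subspace_orth_compl] by (meson not_le)
    then show False using dim_orth_compl[OF subspace_H] dim_H by linarith
  qed
  then show ?thesis using that by blast
qed

lemma causal_orthogonal_timelike_zero:
  assumes z: "z \<in> K" "B z z > 0" and x: "x \<in> K" "B z x = 0" "B x x \<ge> 0"
  shows "x = 0"
proof -
  let ?S = "{h + c *\<^sub>R z | h c. h \<in> H}"
  have "pos_plane B k ?S" using pos_plane_add_orthogonal[OF subspace_H positive_H z] dim_H by simp
  moreover have "x \<in> orth_compl B ?S" using x unfolding orth_compl_def by auto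
  ultimately show ?thesis using causal_orthogonal_maximal_positive_zero x(3) by blast
qed

definition causal_cone :: "'a set" where
  "causal_cone = {w \<in> K. B w w \<ge> 0 \<and> w \<noteq> 0}"

lemma connected_half_cone:
  assumes t: "t \<in> K" "B t t > 0"
  shows "connected {w \<in> causal_cone. B t w > 0}"
proof (rule starlike_imp_connected, unfold starlike_def, intro bexI ballI subsetI)
  show "t \<in> {w \<in> causal_cone. B t w > 0}" using t unfolding causal_cone_def by auto
  fix x y assume x: "x \<in> {w \<in> causal_cone. B t w > 0}" and "y \<in> closed_segment t x"
  then obtain u where u: "0 \<le> u" "u \<le> 1" "y = (1 - u) *\<^sub>R t + u *\<^sub>R x"
    unfolding closed_segment_def by auto
  have xK: "x \<in> K" "B x x \<ge> 0" "B t x > 0" using x unfolding causal_cone_def by auto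
  have "y \<in> K" using u(3) xK(1) t(1) subspace_orth_compl[of H]
    by (simp add: subspace_add subspace_scale)
  have "B t y = (1 - u) * B t t + u * B t x" using u(3) by simp
  moreover have "(1 - u) * B t t > 0 \<or> u * B t x > 0" using u t xK by (cases "u = 1") auto
  moreover have "(1 - u) * B t t \<ge> 0" "u * B t x \<ge> 0" using u t xK by auto
  ultimately have "B t y > 0" by linarith
  have "B y y = (1 - u)\<^sup>2 * B t t + 2 * (u * (1 - u)) * B t x + u\<^sup>2 * B x x"
    unfolding u(3) by (simp add: commute[of x t] power2_eq_square algebra_simps)
  moreover have "(1 - u)\<^sup>2 * B t t \<ge> 0" "2 * (u * (1 - u)) * B t x \<ge> 0" "u\<^sup>2 * B x x \<ge> 0"
    using u t xK by auto
  ultimately have "B y y \<ge> 0" by linarith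
  with \<open>y \<in> K\<close> \<open>B t y > 0\<close> show "y \<in> {w \<in> causal_cone. B t w > 0}"
    unfolding causal_cone_def by auto
qed

lemma causal_in_component_or_neg:
  assumes C: "C \<in> components causal_cone" and w: "w \<in> causal_cone"
  shows "w \<in> C \<or> - w \<in> C"
proof -
  have neg_cone: "- v \<in> causal_cone" if "v \<in> causal_cone" for v
    using that subspace_neg[OF subspace_orth_compl] unfolding causal_cone_def by auto
  have nonzero: "B t v \<noteq> 0" if "t \<in> K" "B t t > 0" "v \<in> causal_cone" for t v
    using causal_orthogonal_timelike_zero[OF that(1,2)] that(3) unfolding causal_cone_def by auto
  \<comment> \<open>\<open>C\<close> contains the half of the cone on the same side of \<open>t\<^sup>\<perp>\<close> as one of its points.\<close>
  obtain x0 where x0: "x0 \<in> causal_cone" "C = connected_component_set causal_cone x0"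
    using C components_iff by blast
  obtain t where t: "t \<in> K" "B t t > 0" "B t x0 > 0"
  proof -
    obtain t where "t \<in> K" "B t t > 0" by (rule timelike_exists)
    moreover have "- t \<in> K" using calculation(1) subspace_neg[OF subspace_orth_compl] by blast
    ultimately show ?thesis using that nonzero[of t x0] x0(1) by (cases "B t x0 > 0") auto
  qed
  have half: "{v \<in> causal_cone. B t v > 0} \<subseteq> C"
    unfolding x0(2) using x0(1) t(3) connected_half_cone[OF t(1,2)]
    by (intro connected_component_maximal) auto
  show ?thesis
    using half w neg_cone[OF w] nonzero[OF t(1,2) w] by (cases "B t w > 0") auto
qed

lemma orth_extendable_iff: "orth_extendable B k Z H \<longleftrightarrow> (\<exists>z\<in>Z \<inter> K. B z z > 0)"
proof
  assume "orth_extendable B k Z H"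
  then obtain z where z: "z \<in> Z \<inter> K" and P: "pos_plane B k {h + c *\<^sub>R z | h c. h \<in> H}"
    unfolding orth_extendable_def by blast
  have "z \<noteq> 0"
  proof
    assume "z = 0"
    then have "{h + c *\<^sub>R z | h c. h \<in> H} = H" by force
    then show False using P dim_H unfolding pos_plane_def by simp
  qed
  moreover have "z \<in> {h + c *\<^sub>R z | h c. h \<in> H}"
    using subspace_0[OF subspace_H] by (intro CollectI exI[of _ 0] exI[of _ 1]) auto
  ultimately show "\<exists>z\<in>Z \<inter> K. B z z > 0" using z P unfolding pos_plane_def by blast
next
  assume "\<exists>z\<in>Z \<inter> K. B z z > 0"
  then obtain z where z: "z \<in> Z \<inter> K" "B z z > 0" by blast
  then have "pos_plane B k {h + c *\<^sub>R z | h c. h \<in> H}"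
    using pos_plane_add_orthogonal[OF subspace_H positive_H] dim_H by simp
  then show "orth_extendable B k Z H" unfolding orth_extendable_def using z(1) by blast
qed

lemma proj_perp_image_orth_compl:
  assumes Z: "subspace Z"
  shows "proj_perp B H ` orth_compl B Z = K \<inter> orth_compl B (Z \<inter> K)"
proof
  note proj = proj_perp_spec[OF subspace_H H_inter_K]
  show "proj_perp B H ` orth_compl B Z \<subseteq> K \<inter> orth_compl B (Z \<inter> K)"
  proof clarify
    fix v assume v: "v \<in> orth_compl B Z"
    let ?y = "proj_perp B H v"
    have "B u ?y = 0" if "u \<in> Z \<inter> K" for u
    proof -
      have "B u v = 0" using v that unfolding orth_compl_def by blast
      moreover have "B (v - ?y) u = 0" using proj(2)[of v] that unfolding orth_compl_def by blast
      ultimately show ?thesis using commute[of "v - ?y" u] by simp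
    qed
    then show "?y \<in> K \<inter> orth_compl B (Z \<inter> K)" using proj(1) unfolding orth_compl_def by blast
  qed
  show "K \<inter> orth_compl B (Z \<inter> K) \<subseteq> proj_perp B H ` orth_compl B Z"
  proof
    fix y assume y: "y \<in> K \<inter> orth_compl B (Z \<inter> K)"
    let ?U = "{x + h |x h. x \<in> orth_compl B Z \<and> h \<in> H}"
    have U: "subspace ?U" using subspace_sums[OF subspace_orth_compl subspace_H] .
    have "orth_compl B ?U = Z \<inter> K"
      using orth_compl_sums[OF subspace_orth_compl subspace_H] orth_compl_orth_compl[OF Z] by simp
    then have "y \<in> ?U" using y orth_compl_orth_compl[OF U] by simp
    then obtain x h where xh: "y = x + h" "x \<in> orth_compl B Z" "h \<in> H" by blast
    have "x - y \<in> H" using xh(1,3) subspace_neg[OF subspace_H] by simp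
    then have "proj_perp B H x = y" using proj(3) y by blast
    then show "y \<in> proj_perp B H ` orth_compl B Z" using xh(2) by blast
  qed
qed

lemma positive_iff_disjoint_component:
  assumes Z: "subspace Z" and C: "C \<in> components causal_cone"
  shows "(\<exists>z\<in>Z \<inter> K. B z z > 0) \<longleftrightarrow> K \<inter> orth_compl B (Z \<inter> K) \<inter> C = {}"
proof
  assume "\<exists>z\<in>Z \<inter> K. B z z > 0"
  then obtain z where z: "z \<in> Z \<inter> K" "B z z > 0" by blast
  show "K \<inter> orth_compl B (Z \<inter> K) \<inter> C = {}"
  proof (rule equals0I)
    fix y assume y: "y \<in> K \<inter> orth_compl B (Z \<inter> K) \<inter> C"
    then have "y \<in> causal_cone" using C in_components_subset by blast
    moreover have "B z y = 0" using y z(1) unfolding orth_compl_def by blast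
    ultimately show False
      using causal_orthogonal_timelike_zero[of z y] z unfolding causal_cone_def by auto
  qed
next
  assume disjoint: "K \<inter> orth_compl B (Z \<inter> K) \<inter> C = {}"
  show "\<exists>z\<in>Z \<inter> K. B z z > 0"
  proof (rule ccontr)
    assume "\<not> ?thesis"
    then have "\<forall>v\<in>Z \<inter> K. B v v \<le> 0" by (meson not_le)
    then obtain w where w: "w \<in> K" "w \<in> orth_compl B (Z \<inter> K)" "w \<noteq> 0" "B w w \<ge> 0"
      using causal_vector_in_orth_compl[OF subspace_H _ subspace_inter[OF Z subspace_orth_compl]]
        dim_H by (metis less_add_one)
    have "- w \<in> K \<inter> orth_compl B (Z \<inter> K)"
      using w(1,2) subspace_neg[OF subspace_orth_compl] by blast
    moreover have "w \<in> C \<or> - w \<in> C"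
      using causal_in_component_or_neg[OF C] w unfolding causal_cone_def by blast
    ultimately show False using disjoint w(1,2) by blast
  qed
qed

end

theorem lemma3:
  fixes B :: "'a::euclidean_space \<Rightarrow> 'a \<Rightarrow> real"
    and Z H C :: "'a set" and k l :: nat
  assumes "pe_form B"
    and "has_signature B k l"
    and "k \<ge> 2" and "l \<ge> 2"
    and "subspace Z" and "q_plus B Z \<ge> 1"
    and "pos_plane B (k - 1) H"
    and "C \<in> components {w \<in> orth_compl B H. B w w \<ge> 0 \<and> w \<noteq> 0}"
  shows "(orth_extendable B k Z H \<longleftrightarrow> q_plus B (Z \<inter> orth_compl B H) \<ge> 1)
    \<and> (q_plus B (Z \<inter> orth_compl B H) \<ge> 1 \<longleftrightarrow>
         proj_perp B H ` orth_compl B Z \<inter> C = {})"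
proof -
  interpret lorentzian_complement B k H
  proof unfold_locales
    show "pe_form B" by (rule assms(1))
    show "q_plus B UNIV = k" using assms(2) unfolding has_signature_def by simp
    show "pos_plane B (k - 1) H" by (rule assms(7))
    show "1 \<le> k" using assms(3) by simp
  qed
  have C: "C \<in> components causal_cone" using assms(8) unfolding causal_cone_def .
  have "subspace (Z \<inter> orth_compl B H)" using assms(5) subspace_orth_compl by (rule subspace_inter)
  then show ?thesis
    using orth_extendable_iff positive_iff_disjoint_component[OF assms(5) C]
      proj_perp_image_orth_compl[OF assms(5)] one_le_q_plus_iff by (simp add: Int_assoc)
qed

end
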